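(* Let $G=(V,E)$ be an $n$-vertex graph, $q>0$ an integer, and $0<\alpha\le1$. Let $V_\alpha=\{v\in V: r(v)\ge\alpha\}$ and $c_q=\sum_{i=0}^{q}q^i$. Then every $v\in V_\alpha$ satisfies $\deg(v)\ge n\alpha/c_q$.
   Context: $q$-random BFS ($q$-RBFS) from a vertex $v$ in the random neighbor model (where a random neighbor query for $u$ returns a uniformly random neighbor of $u$): initialize a queue $Q=(v)$, level $\ell[v]=0$ (all others $\infty$), and $H=(\{v\},\emptyset)$ rooted at $v$; while $Q$ is nonempty, pop $u$ and make $q$ independent random neighbor queries for $u$ obtaining $s_{u,1},\dots,s_{u,q}$; for each $i$ add $s_{u,i}$ and the edge $\{u,s_{u,i}\}$ to $H$, and if $\ell[u]<q-1$ and $\ell[s_{u,i}]=\infty$, set $\ell[s_{u,i}]=\ell[u]+1$ and enqueue $s_{u,i}$; return $H$ (undirected, simple). The reach probability $r(v)$ of a vertex $v$ is the probability that a $q$-RBFS started at a uniformly random vertex of $V$ reaches (includes) $v$. *)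

theory Defs
  imports "HOL-Probability.Probability"
begin

definition nbrs :: "'a set \<Rightarrow> ('a \<Rightarrow> 'a \<Rightarrow> bool) \<Rightarrow> 'a \<Rightarrow> 'a set" where
  "nbrs V E u = {w \<in> V. E u w}"

definition deg :: "'a set \<Rightarrow> ('a \<Rightarrow> 'a \<Rightarrow> bool) \<Rightarrow> 'a \<Rightarrow> nat" where
  "deg V E u = card (nbrs V E u)"

fun rn_queries :: "'a set \<Rightarrow> ('a \<Rightarrow> 'a \<Rightarrow> bool) \<Rightarrow> 'a \<Rightarrow> nat \<Rightarrow> 'a list pmf" where
  "rn_queries V E u 0 = return_pmf []"
| "rn_queries V E u (Suc k) =
     bind_pmf (pmf_of_set (nbrs V E u)) (\<lambda>s. map_pmf (\<lambda>xs. s # xs) (rn_queries V E u k))"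

text \<open>State of the q-RBFS: queue Q, levels (None = infinity), vertex set and edge set of H.\<close>
type_synonym 'a rbfs_state = "'a list \<times> ('a \<Rightarrow> nat option) \<times> 'a set \<times> 'a set set"

definition rbfs_process :: "nat \<Rightarrow> 'a \<Rightarrow> nat \<Rightarrow> 'a \<Rightarrow> 'a rbfs_state \<Rightarrow> 'a rbfs_state" where
  "rbfs_process q u lu s st = (case st of (Q, lvl, HV, HE) \<Rightarrow>
     (if lu < q - 1 \<and> lvl s = None
      then (Q @ [s], lvl(s := Some (lu + 1)), insert s HV, insert {u, s} HE)
      else (Q, lvl, insert s HV, insert {u, s} HE)))"

definition rbfs_step :: "'a set \<Rightarrow> ('a \<Rightarrow> 'a \<Rightarrow> bool) \<Rightarrow> nat \<Rightarrow> 'a rbfs_state \<Rightarrow> 'a rbfs_state pmf" where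
  "rbfs_step V E q st = (case st of (Q, lvl, HV, HE) \<Rightarrow>
     (case Q of [] \<Rightarrow> return_pmf st
      | u # Q' \<Rightarrow> map_pmf (\<lambda>ss. fold (rbfs_process q u (the (lvl u))) ss (Q', lvl, HV, HE))
                          (rn_queries V E u q)))"

fun rbfs_iter :: "'a set \<Rightarrow> ('a \<Rightarrow> 'a \<Rightarrow> bool) \<Rightarrow> nat \<Rightarrow> nat \<Rightarrow> 'a rbfs_state \<Rightarrow> 'a rbfs_state pmf" where
  "rbfs_iter V E q 0 st = return_pmf st"
| "rbfs_iter V E q (Suc k) st = bind_pmf (rbfs_step V E q st) (rbfs_iter V E q k)"

text \<open>Each vertex is enqueued at most once, so the loop makes at most card V
  pops; running card V iterations (extra ones are no-ops) yields the loop's output.\<close>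
definition qRBFS :: "'a set \<Rightarrow> ('a \<Rightarrow> 'a \<Rightarrow> bool) \<Rightarrow> nat \<Rightarrow> 'a \<Rightarrow> ('a set \<times> 'a set set) pmf" where
  "qRBFS V E q v =
     map_pmf (\<lambda>(Q, lvl, HV, HE). (HV, HE))
       (rbfs_iter V E q (card V) ([v], (\<lambda>_. None)(v := Some 0), {v}, {}))"

definition reach_prob :: "'a set \<Rightarrow> ('a \<Rightarrow> 'a \<Rightarrow> bool) \<Rightarrow> nat \<Rightarrow> 'a \<Rightarrow> real" where
  "reach_prob V E q v =
     measure_pmf.prob (bind_pmf (pmf_of_set V) (qRBFS V E q)) {H. v \<in> fst H}"

definition V_alpha :: "'a set \<Rightarrow> ('a \<Rightarrow> 'a \<Rightarrow> bool) \<Rightarrow> nat \<Rightarrow> real \<Rightarrow> 'a set" where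
  "V_alpha V E q \<alpha> = {v \<in> V. reach_prob V E q v \<ge> \<alpha>}"

definition c_q :: "nat \<Rightarrow> nat" where
  "c_q q = (\<Sum>i\<le>q. q ^ i)"

end

theory Submission
  imports Defs
begin

text \<open>Let \<open>g d x\<close> (\<open>hit_bound\<close>) bound the expected number of times \<open>v\<close> is returned by the
  queries of a \<open>q\<close>-ary random exploration of depth \<open>d\<close> from \<open>x\<close>. During a \<open>q\<close>-RBFS the
  potential \<open>[v \<in> H] + \<Sum>\<^sub>w\<^sub>\<in>\<^sub>Q g (q - \<ell>[w]) w\<close> is a supermartingale, so a search started at \<open>u\<close>
  reaches \<open>v\<close> with probability at most \<open>[u = v] + g q u\<close>. Averaging over \<open>u\<close>, and using that the
  random walk is reversible with respect to the degrees, gives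
  \<open>\<Sum>\<^sub>u g q u \<le> deg v (q + q\<^sup>2 + \<dots> + q\<^sup>q)\<close>, hence \<open>n r(v) \<le> deg v \<cdot> c\<^sub>q\<close>.\<close>

fun hit_bound :: "'a set \<Rightarrow> ('a \<Rightarrow> 'a \<Rightarrow> bool) \<Rightarrow> nat \<Rightarrow> 'a \<Rightarrow> nat \<Rightarrow> 'a \<Rightarrow> real" where
  "hit_bound V E q v 0 x = 0"
| "hit_bound V E q v (Suc d) x = real q / real (deg V E x) *
     (\<Sum>y\<in>nbrs V E x. of_bool (y = v) + hit_bound V E q v d y)"

fun rbfs_potential :: "'a set \<Rightarrow> ('a \<Rightarrow> 'a \<Rightarrow> bool) \<Rightarrow> nat \<Rightarrow> 'a \<Rightarrow> 'a rbfs_state \<Rightarrow> real" where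
  "rbfs_potential V E q v (Q, lvl, HV, HE) = of_bool (v \<in> HV) +
     (\<Sum>w\<leftarrow>Q. hit_bound V E q v (q - the (lvl w)) w)"

fun rbfs_wf :: "'a set \<Rightarrow> nat \<Rightarrow> 'a rbfs_state \<Rightarrow> bool" where
  "rbfs_wf V q (Q, lvl, HV, HE) = (\<forall>w\<in>set Q. w \<in> V \<and> lvl w \<noteq> None \<and> the (lvl w) < q)"

lemma deg_pos: "finite V \<Longrightarrow> nbrs V E x \<noteq> {} \<Longrightarrow> 0 < deg V E x"
  unfolding deg_def nbrs_def by (simp add: card_gt_0_iff)

lemma hit_bound_nonneg: "0 \<le> hit_bound V E q v d x"
  by (induction d arbitrary: x) (auto intro!: divide_nonneg_nonneg mult_nonneg_nonneg sum_nonneg add_nonneg_nonneg)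

lemma rbfs_potential_nonneg: "0 \<le> rbfs_potential V E q v st"
  by (cases st) (auto intro!: sum_list_nonneg add_nonneg_nonneg simp: hit_bound_nonneg)

lemma set_pmf_rn_queries:
  assumes "finite (nbrs V E u)" "nbrs V E u \<noteq> {}" "ss \<in> set_pmf (rn_queries V E u k)"
  shows "set ss \<subseteq> nbrs V E u"
  using assms(3) by (induction k arbitrary: ss) (fastforce simp: assms(1,2))+

lemma nn_integral_rn_queries_sum_list:
  assumes fin: "finite (nbrs V E u)" and ne: "nbrs V E u \<noteq> {}"
    and h_nonneg: "\<And>y. 0 \<le> h y" and "0 \<le> c"
  shows "(\<integral>\<^sup>+ss. ennreal (c + (\<Sum>s\<leftarrow>ss. h s)) \<partial>rn_queries V E u k)
     = ennreal (c + real k * (\<Sum>y\<in>nbrs V E u. h y) / real (card (nbrs V E u)))"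
  using \<open>0 \<le> c\<close>
proof (induction k arbitrary: c)
  case 0
  then show ?case by simp
next
  case (Suc k)
  let ?N = "nbrs V E u"
  let ?A = "(\<Sum>y\<in>?N. h y) / real (card ?N)"
  have card_pos: "0 < card ?N" using fin ne by (simp add: card_gt_0_iff)
  have A_nonneg: "0 \<le> ?A" by (simp add: h_nonneg sum_nonneg)
  have "(\<integral>\<^sup>+ss. ennreal (c + (\<Sum>s\<leftarrow>ss. h s)) \<partial>rn_queries V E u (Suc k))
     = (\<integral>\<^sup>+s. ennreal ((c + h s) + real k * ?A) \<partial>pmf_of_set ?N)"
    using Suc.IH[of "c + h _"] Suc.prems h_nonneg by (simp add: add.assoc)
  also have "\<dots> = ennreal (\<Sum>s\<in>?N. c + h s + real k * ?A) / ennreal (real (card ?N))"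
    using fin ne Suc.prems h_nonneg A_nonneg
    by (simp add: nn_integral_pmf_of_set ennreal_of_nat_eq_real_of_nat)
      (subst sum_ennreal; auto intro!: add_nonneg_nonneg mult_nonneg_nonneg divide_nonneg_nonneg sum_nonneg)
  also have "\<dots> = ennreal ((\<Sum>s\<in>?N. c + h s + real k * ?A) / real (card ?N))"
    using card_pos Suc.prems h_nonneg A_nonneg
    by (subst divide_ennreal) (auto intro!: sum_nonneg add_nonneg_nonneg mult_nonneg_nonneg divide_nonneg_nonneg)
  also have "(\<Sum>s\<in>?N. c + h s + real k * ?A) / real (card ?N) = c + real (Suc k) * ?A"
  proof -
    have "(\<Sum>s\<in>?N. c + h s + real k * ?A) = real (card ?N) * (c + real k * ?A) + sum h ?N"
      by (simp add: sum.distrib algebra_simps)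
    then show ?thesis using card_pos by (simp add: add_divide_distrib algebra_simps)
  qed
  finally show ?case by simp
qed

lemma rbfs_wf_process:
  assumes "lu < q" "s \<in> V" "rbfs_wf V q st"
  shows "rbfs_wf V q (rbfs_process q u lu s st)"
  using assms by (cases st) (auto simp: rbfs_process_def)

text \<open>When \<open>lu = q - 1\<close> nothing is enqueued, but then \<open>q - Suc lu = 0\<close> and the term
  \<open>hit_bound \<dots> 0 s\<close> vanishes, so no case distinction is needed.\<close>
lemma rbfs_potential_process_le:
  assumes "lu < q" "rbfs_wf V q st"
  shows "rbfs_potential V E q v (rbfs_process q u lu s st)
    \<le> rbfs_potential V E q v st + (of_bool (s = v) + hit_bound V E q v (q - Suc lu) s)"
proof -
  obtain Q lvl HV HE where st: "st = (Q, lvl, HV, HE)" by (cases st) auto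
  show ?thesis
  proof (cases "lu < q - 1 \<and> lvl s = None")
    case True
    then have "s \<notin> set Q" using assms(2) unfolding st by auto
    then have "(\<Sum>w\<leftarrow>Q. hit_bound V E q v (q - the ((lvl(s := Some (lu + 1))) w)) w)
        = (\<Sum>w\<leftarrow>Q. hit_bound V E q v (q - the (lvl w)) w)"
      by (intro arg_cong[where f = sum_list] map_cong) auto
    with True show ?thesis unfolding st rbfs_process_def by (auto simp: hit_bound_nonneg)
  next
    case False
    then show ?thesis unfolding st rbfs_process_def by (auto simp: hit_bound_nonneg)
  qed
qed

lemma rbfs_fold_process:
  assumes "lu < q" "set ss \<subseteq> V" "rbfs_wf V q st"
  shows "rbfs_wf V q (fold (rbfs_process q u lu) ss st) \<and>
    rbfs_potential V E q v (fold (rbfs_process q u lu) ss st) \<le> rbfs_potential V E q v st +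
      (\<Sum>s\<leftarrow>ss. of_bool (s = v) + hit_bound V E q v (q - Suc lu) s)"
  using assms(2,3)
proof (induction ss arbitrary: st)
  case Nil
  then show ?case by simp
next
  case (Cons s ss)
  have "rbfs_wf V q (rbfs_process q u lu s st)"
    using Cons.prems by (intro rbfs_wf_process[OF assms(1)]) auto
  with Cons.IH[of "rbfs_process q u lu s st"] Cons.prems
    rbfs_potential_process_le[OF assms(1) Cons.prems(2), of E v u s]
  show ?case by auto
qed

lemma rbfs_step_pop:
  assumes finV: "finite V" and ne: "\<And>u. u \<in> V \<Longrightarrow> nbrs V E u \<noteq> {}"
    and wf: "rbfs_wf V q (u # Q, lvl, HV, HE)"
  defines "st \<equiv> (u # Q, lvl, HV, HE)"
  shows "\<forall>st'\<in>set_pmf (rbfs_step V E q st). rbfs_wf V q st'"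
    and "(\<integral>\<^sup>+x. rbfs_potential V E q v x \<partial>rbfs_step V E q st) \<le> rbfs_potential V E q v st"
proof -
  define lu where "lu = the (lvl u)"
  define st0 where "st0 = (Q, lvl, HV, HE)"
  define N where "N = nbrs V E u"
  define h where "h s = of_bool (s = v) + hit_bound V E q v (q - Suc lu) s" for s
  have uV: "u \<in> V" and lu: "lu < q" and wf0: "rbfs_wf V q st0"
    using wf unfolding lu_def st0_def by auto
  have finN: "finite N" and neN: "N \<noteq> {}" and NV: "N \<subseteq> V"
    using finV ne[OF uV] unfolding N_def nbrs_def by auto
  have step: "rbfs_step V E q st = map_pmf (\<lambda>ss. fold (rbfs_process q u lu) ss st0) (rn_queries V E u q)"
    unfolding st_def rbfs_step_def st0_def lu_def by simp
  have fold: "rbfs_wf V q (fold (rbfs_process q u lu) ss st0) \<and>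
      rbfs_potential V E q v (fold (rbfs_process q u lu) ss st0) \<le> rbfs_potential V E q v st0 + (\<Sum>s\<leftarrow>ss. h s)"
    if "ss \<in> set_pmf (rn_queries V E u q)" for ss
    using rbfs_fold_process[OF lu _ wf0] set_pmf_rn_queries[OF _ _ that] finN neN NV
    unfolding h_def N_def by blast
  then show "\<forall>st'\<in>set_pmf (rbfs_step V E q st). rbfs_wf V q st'"
    unfolding step by auto
  have h_nonneg: "0 \<le> h y" for y unfolding h_def by (simp add: hit_bound_nonneg)
  have "(\<integral>\<^sup>+x. rbfs_potential V E q v x \<partial>rbfs_step V E q st)
      \<le> (\<integral>\<^sup>+ss. ennreal (rbfs_potential V E q v st0 + (\<Sum>s\<leftarrow>ss. h s)) \<partial>rn_queries V E u q)"
    unfolding step using fold by (auto intro!: nn_integral_mono_AE ennreal_leI simp: AE_measure_pmf_iff)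
  also have "\<dots> = rbfs_potential V E q v st0 + real q * (\<Sum>y\<in>N. h y) / real (card N)"
    using nn_integral_rn_queries_sum_list[of V E u h, OF _ _ h_nonneg rbfs_potential_nonneg] finN neN
    unfolding N_def by simp
  also have "real q * (\<Sum>y\<in>N. h y) / real (card N) = hit_bound V E q v (q - lu) u"
    using lu by (simp add: Suc_diff_Suc[symmetric] h_def N_def deg_def)
  also have "rbfs_potential V E q v st0 + \<dots> = rbfs_potential V E q v st"
    unfolding st_def st0_def lu_def by simp
  finally show "(\<integral>\<^sup>+x. rbfs_potential V E q v x \<partial>rbfs_step V E q st) \<le> rbfs_potential V E q v st" .
qed

lemma rbfs_step:
  assumes "finite V" "\<And>u. u \<in> V \<Longrightarrow> nbrs V E u \<noteq> {}" "rbfs_wf V q st"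
  shows "\<forall>st'\<in>set_pmf (rbfs_step V E q st). rbfs_wf V q st'"
    and "(\<integral>\<^sup>+x. rbfs_potential V E q v x \<partial>rbfs_step V E q st) \<le> rbfs_potential V E q v st"
proof -
  obtain Q lvl HV HE where st: "st = (Q, lvl, HV, HE)" by (cases st) auto
  consider "Q = []" | u Q' where "Q = u # Q'" by (cases Q) auto
  then have "(\<forall>st'\<in>set_pmf (rbfs_step V E q st). rbfs_wf V q st') \<and>
    (\<integral>\<^sup>+x. rbfs_potential V E q v x \<partial>rbfs_step V E q st) \<le> rbfs_potential V E q v st"
  proof cases
    case 1
    then show ?thesis using assms(3) unfolding st rbfs_step_def by simp
  next
    case (2 u Q')
    then have "rbfs_wf V q (u # Q', lvl, HV, HE)" using assms(3) unfolding st by blast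
    then show ?thesis unfolding st 2 using rbfs_step_pop[OF assms(1,2)] by blast
  qed
  then show "\<forall>st'\<in>set_pmf (rbfs_step V E q st). rbfs_wf V q st'"
    and "(\<integral>\<^sup>+x. rbfs_potential V E q v x \<partial>rbfs_step V E q st) \<le> rbfs_potential V E q v st"
    by auto
qed

lemma rbfs_iter_potential_le:
  assumes "finite V" "\<And>u. u \<in> V \<Longrightarrow> nbrs V E u \<noteq> {}" "rbfs_wf V q st"
  shows "(\<integral>\<^sup>+x. rbfs_potential V E q v x \<partial>rbfs_iter V E q k st) \<le> rbfs_potential V E q v st"
  using assms(3)
proof (induction k arbitrary: st)
  case 0
  then show ?case by simp
next
  case (Suc k)
  have "(\<integral>\<^sup>+x. rbfs_potential V E q v x \<partial>rbfs_iter V E q (Suc k) st)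
      = (\<integral>\<^sup>+st'. (\<integral>\<^sup>+x. rbfs_potential V E q v x \<partial>rbfs_iter V E q k st') \<partial>rbfs_step V E q st)"
    by simp
  also have "\<dots> \<le> (\<integral>\<^sup>+st'. rbfs_potential V E q v st' \<partial>rbfs_step V E q st)"
    using rbfs_step(1)[OF assms(1,2) Suc.prems] Suc.IH
    by (intro nn_integral_mono_AE) (simp add: AE_measure_pmf_iff del: rbfs_wf.simps rbfs_potential.simps)
  also have "\<dots> \<le> rbfs_potential V E q v st"
    by (rule rbfs_step(2)[OF assms(1,2) Suc.prems])
  finally show ?case .
qed

lemma emeasure_qRBFS_reaches_le:
  assumes "finite V" "\<And>u. u \<in> V \<Longrightarrow> nbrs V E u \<noteq> {}" "u \<in> V" "0 < q"
  shows "emeasure (qRBFS V E q u) {H. v \<in> fst H}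
     \<le> of_bool (u = v) + hit_bound V E q v q u"
proof -
  define st0 :: "'a rbfs_state" where "st0 = ([u], (\<lambda>_. None)(u := Some 0), {u}, {})"
  let ?M = "rbfs_iter V E q (card V) st0"
  let ?reached = "{st :: 'a rbfs_state. v \<in> fst (snd (snd st))}"
  have "emeasure (qRBFS V E q u) {H. v \<in> fst H} = (\<integral>\<^sup>+x. indicator ?reached x \<partial>?M)"
    unfolding qRBFS_def st0_def
    by (simp add: nn_integral_indicator vimage_def case_prod_unfold)
  also have "\<dots> \<le> (\<integral>\<^sup>+x. rbfs_potential V E q v x \<partial>?M)"
    by (intro nn_integral_mono)
      (auto simp: indicator_def hit_bound_nonneg intro!: sum_list_nonneg)
  also have "\<dots> \<le> rbfs_potential V E q v st0"
    by (rule rbfs_iter_potential_le) (use assms in \<open>auto simp: st0_def\<close>)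
  also have "rbfs_potential V E q v st0 = of_bool (u = v) + hit_bound V E q v q u"
    unfolding st0_def by auto
  finally show ?thesis .
qed

lemma reach_prob_times_card_le:
  assumes "finite V" "\<And>u. u \<in> V \<Longrightarrow> nbrs V E u \<noteq> {}" "v \<in> V" "0 < q"
  shows "reach_prob V E q v * real (card V) \<le> 1 + (\<Sum>u\<in>V. hit_bound V E q v q u)"
proof -
  define b where "b u = of_bool (u = v) + hit_bound V E q v q u" for u
  have b_nonneg: "0 \<le> b u" for u unfolding b_def by (simp add: hit_bound_nonneg)
  have V_ne: "V \<noteq> {}" and card_pos: "0 < card V"
    using assms(1,3) by (auto simp: card_gt_0_iff)
  have "ennreal (reach_prob V E q v) = (\<integral>\<^sup>+u. emeasure (qRBFS V E q u) {H. v \<in> fst H} \<partial>pmf_of_set V)"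
    unfolding reach_prob_def by (simp add: measure_pmf.emeasure_eq_measure[symmetric])
  also have "\<dots> \<le> (\<integral>\<^sup>+u. b u \<partial>pmf_of_set V)"
    using emeasure_qRBFS_reaches_le[OF assms(1,2) _ assms(4)]
    by (auto intro!: nn_integral_mono_AE simp: AE_measure_pmf_iff b_def set_pmf_of_set[OF V_ne assms(1)])
  also have "\<dots> = ennreal ((\<Sum>u\<in>V. b u) / real (card V))"
    using assms(1) V_ne card_pos b_nonneg
    by (simp add: nn_integral_pmf_of_set sum_ennreal ennreal_of_nat_eq_real_of_nat divide_ennreal sum_nonneg)
  finally have "reach_prob V E q v \<le> (\<Sum>u\<in>V. b u) / real (card V)"
    using b_nonneg by (simp add: ennreal_le_iff sum_nonneg)
  moreover have "(\<Sum>u\<in>V. b u) = 1 + (\<Sum>u\<in>V. hit_bound V E q v q u)"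
    unfolding b_def using assms(1,3) by (simp add: sum.distrib)
  ultimately show ?thesis using card_pos by (simp add: field_simps)
qed

lemma sum_nbrs_swap:
  assumes "finite V" "\<And>x y. E x y \<Longrightarrow> E y x"
  shows "(\<Sum>x\<in>V. \<Sum>y\<in>nbrs V E x. G x y) = (\<Sum>y\<in>V. \<Sum>x\<in>nbrs V E y. (G x y :: real))"
proof -
  have E_sym: "E x y = E y x" for x y using assms(2) by blast
  have "(\<Sum>x\<in>V. \<Sum>y\<in>nbrs V E x. G x y) = (\<Sum>x\<in>V. \<Sum>y\<in>V. if E x y then G x y else 0)"
    unfolding nbrs_def using assms(1) by (simp add: sum.inter_filter)
  also have "\<dots> = (\<Sum>y\<in>V. \<Sum>x\<in>V. if E y x then G x y else 0)"
    by (subst sum.swap) (simp add: E_sym)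
  also have "\<dots> = (\<Sum>y\<in>V. \<Sum>x\<in>nbrs V E y. G x y)"
    unfolding nbrs_def using assms(1) by (simp add: sum.inter_filter)
  finally show ?thesis .
qed

lemma sum_nbrs_div_deg_bounds:
  assumes "finite V" "\<And>u. u \<in> V \<Longrightarrow> nbrs V E u \<noteq> {}"
    and "\<And>x. x \<in> V \<Longrightarrow> 0 \<le> w x \<and> w x \<le> real (deg V E x)"
  shows "0 \<le> (\<Sum>x\<in>nbrs V E y. w x / real (deg V E x))"
    and "(\<Sum>x\<in>nbrs V E y. w x / real (deg V E x)) \<le> real (deg V E y)"
proof -
  have "0 < real (deg V E x)" if "x \<in> V" for x
    using deg_pos[OF assms(1) assms(2)[OF that]] by simp
  then have "x \<in> nbrs V E y \<Longrightarrow> 0 \<le> w x / real (deg V E x) \<and> w x / real (deg V E x) \<le> 1" for x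
    using assms(3) unfolding nbrs_def by auto
  then show "0 \<le> (\<Sum>x\<in>nbrs V E y. w x / real (deg V E x))"
    and "(\<Sum>x\<in>nbrs V E y. w x / real (deg V E x)) \<le> real (deg V E y)"
    using sum_mono[of "nbrs V E y" "\<lambda>x. w x / real (deg V E x)" "\<lambda>_. 1"]
    by (auto intro: sum_nonneg simp: deg_def)
qed

text \<open>Pushing weights \<open>w x \<le> deg x\<close> one step along the random walk keeps them below the
  degrees, the stationary measure; so each level of the exploration contributes at most
  \<open>deg v\<close> times its number of queries.\<close>
lemma weighted_hit_bound_le:
  assumes finV: "finite V" and sym: "\<And>x y. E x y \<Longrightarrow> E y x"
    and ne: "\<And>u. u \<in> V \<Longrightarrow> nbrs V E u \<noteq> {}" and "v \<in> V"
    and "\<And>x. x \<in> V \<Longrightarrow> 0 \<le> w x \<and> w x \<le> real (deg V E x)"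
  shows "(\<Sum>x\<in>V. w x * hit_bound V E q v d x) \<le> real (deg V E v) * (\<Sum>i<d. real q ^ Suc i)"
  using assms(5)
proof (induction d arbitrary: w)
  case 0
  then show ?case by simp
next
  case (Suc d)
  define w' where "w' y = (\<Sum>x\<in>nbrs V E y. w x / real (deg V E x))" for y
  define F where "F y = of_bool (y = v) + hit_bound V E q v d y" for y
  have w'_bounds: "0 \<le> w' y \<and> w' y \<le> real (deg V E y)" for y
    unfolding w'_def using sum_nbrs_div_deg_bounds[OF finV ne Suc.prems] by auto
  have split_F: "(\<Sum>y\<in>V. w' y * F y) = w' v + (\<Sum>y\<in>V. w' y * hit_bound V E q v d y)"
    using finV \<open>v \<in> V\<close> by (simp add: F_def distrib_left sum.distrib)
  have "(\<Sum>x\<in>V. w x * hit_bound V E q v (Suc d) x)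
      = (\<Sum>x\<in>V. \<Sum>y\<in>nbrs V E x. real q * (w x / real (deg V E x) * F y))"
    by (simp add: F_def sum_distrib_left mult_ac)
  also have "\<dots> = (\<Sum>y\<in>V. \<Sum>x\<in>nbrs V E y. real q * (w x / real (deg V E x) * F y))"
    by (rule sum_nbrs_swap[OF finV sym])
  also have "\<dots> = real q * (w' v + (\<Sum>y\<in>V. w' y * hit_bound V E q v d y))"
    unfolding split_F[symmetric] by (simp add: w'_def sum_distrib_left sum_distrib_right mult_ac)
  also have "\<dots> \<le> real q * (real (deg V E v) + real (deg V E v) * (\<Sum>i<d. real q ^ Suc i))"
    using w'_bounds Suc.IH[of w'] by (intro mult_left_mono add_mono) auto
  also have "\<dots> = real (deg V E v) * (\<Sum>i<Suc d. real q ^ Suc i)"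
    by (induction d) (simp_all add: algebra_simps)
  finally show ?case .
qed

lemma c_q_eq: "real (c_q q) = 1 + (\<Sum>i<q. real q ^ Suc i)"
proof -
  have "real (c_q q) = (\<Sum>i<Suc q. real q ^ i)"
    unfolding c_q_def lessThan_Suc_atMost by simp
  then show ?thesis by (subst (asm) sum.lessThan_Suc_shift) simp
qed

theorem lemma3p9:
  fixes V :: "'a set" and E :: "'a \<Rightarrow> 'a \<Rightarrow> bool" and q :: nat and \<alpha> :: real and v :: 'a
  assumes "finite V"
    and "\<And>x y. E x y \<Longrightarrow> x \<in> V \<and> y \<in> V"
    and "\<And>x y. E x y \<Longrightarrow> E y x"
    and "\<And>x. \<not> E x x"
    and "\<And>u. u \<in> V \<Longrightarrow> nbrs V E u \<noteq> {}"
    and "q > 0"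
    and "0 < \<alpha>" and "\<alpha> \<le> 1"
    and "v \<in> V_alpha V E q \<alpha>"
  shows "real (deg V E v) \<ge> real (card V) * \<alpha> / real (c_q q)"
proof -
  have vV: "v \<in> V" and reach: "\<alpha> \<le> reach_prob V E q v"
    using assms(9) unfolding V_alpha_def by auto
  have deg_ge_1: "1 \<le> real (deg V E x)" if "x \<in> V" for x
    using deg_pos[OF assms(1) assms(5)[OF that]] by simp
  have "real (card V) * \<alpha> \<le> reach_prob V E q v * real (card V)"
    using mult_right_mono[OF reach, of "real (card V)"] by (simp add: mult.commute)
  also have "\<dots> \<le> 1 + (\<Sum>u\<in>V. 1 * hit_bound V E q v q u)"
    using reach_prob_times_card_le[OF assms(1,5) vV assms(6)] by simp
  also have "\<dots> \<le> 1 + real (deg V E v) * (\<Sum>i<q. real q ^ Suc i)"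
    using weighted_hit_bound_le[OF assms(1,3,5) vV, where w = "\<lambda>_. 1"] deg_ge_1 by simp
  also have "\<dots> \<le> real (deg V E v) * real (c_q q)"
    unfolding c_q_eq using deg_ge_1[OF vV] by (simp add: algebra_simps)
  finally show ?thesis
    by (simp add: divide_le_eq c_q_eq add_pos_nonneg sum_nonneg)
qed

end
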